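(* Let $n$ be a nonnegative integer. Then $$\sum_{r=0}^n(-1)^{r+n}\zeta(\{1\}^r,n+2-r)=\begin{cases}\zeta^\star(\{2\}^{m+1}),& n=2m,\\ 0,& n=2m+1.\end{cases}$$
   Context: $\zeta(\alpha_1,\ldots,\alpha_k)=\sum_{1\le k_1<\cdots<k_k}k_1^{-\alpha_1}\cdots k_k^{-\alpha_k}$ and $\zeta^\star(\alpha_1,\ldots,\alpha_k)=\sum_{1\le k_1\le\cdots\le k_k}k_1^{-\alpha_1}\cdots k_k^{-\alpha_k}$; $\{a\}^k$ denotes $k$ repetitions of $a$. *)

theory Defs
  imports "HOL-Analysis.Analysis"
begin

definition mzv_term :: "nat list \<Rightarrow> nat list \<Rightarrow> real" where
  "mzv_term s ks = prod_list (map2 (\<lambda>k a. 1 / real k ^ a) ks s)"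

definition mzv :: "nat list \<Rightarrow> real" where
  "mzv s = infsum (mzv_term s)
     {ks. length ks = length s \<and> sorted_wrt (<) ks \<and> (\<forall>k\<in>set ks. 1 \<le> k)}"

definition mzv_star :: "nat list \<Rightarrow> real" where
  "mzv_star s = infsum (mzv_term s)
     {ks. length ks = length s \<and> sorted_wrt (\<le>) ks \<and> (\<forall>k\<in>set ks. 1 \<le> k)}"

end

theory Submission
  imports Defs "HOL-Real_Asymp.Real_Asymp" "HOL-Computational_Algebra.Formal_Laurent_Series"
begin

(*
  Let Q_k(z) = prod_{j=1..k} (1 + z/j) and R_k(z) = Q_k(-z). An induction on N, driven by the
  Chu-Vandermonde convolution, gives the rational identity

    sum_{i<N} Q_i(z) R_{N-1-i}(z) / ((i+1)(i+1+z)) = R_N(z) sum_{l=1..N} 1 / (l^2 Q_l(z) R_l(z)).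

  Divide by R_N and compare coefficients of z^n. On the right 1/(Q_l R_l) = prod_{j<=l} 1/(1 - z^2/j^2),
  so the coefficient is the truncation at N of zeta*({2}^(m+1)) if n = 2m, and 0 if n is odd. On the
  left the coefficients of Q_i are the elementary symmetric functions of 1, 1/2, ..., 1/i, so the
  factor Q_i(z) / (1 + z/(i+1)) produces exactly the truncated sum of the (-1)^(r+n) zeta({1}^r, n+2-r).
  The remaining factor R_{N-1-i} / R_N = prod_{j=N-i..N} 1/(1 - z/j) is 1 + O(z) with nonnegative
  coefficients, and its higher coefficients contribute an error O((log N)^(2n+2) / N). Let N -> oo.
*)

definition recip_prod :: "'a::field_char_0 \<Rightarrow> nat \<Rightarrow> 'a" where
  "recip_prod z k = (\<Prod>j=1..k. 1 + z / of_nat j)"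

lemma recip_prod_0 [simp]: "recip_prod z 0 = 1"
  by (simp add: recip_prod_def)

lemma recip_prod_Suc: "recip_prod z (Suc k) = recip_prod z k * (1 + z / of_nat (Suc k))"
  by (simp add: recip_prod_def)

lemma pochhammer_eq_fact_recip_prod: "pochhammer (z + 1) k = fact k * recip_prod z k"
proof (induction k)
  case (Suc k)
  have "(1 + of_nat k :: 'a) \<noteq> 0" by (metis of_nat_Suc of_nat_neq_0)
  with Suc show ?case
    by (simp add: recip_prod_Suc pochhammer_Suc field_simps del: of_nat_Suc) (simp add: algebra_simps)
qed simp

lemma recip_prod_eq_pochhammer: "recip_prod z k = pochhammer (z + 1) k / fact k"
  by (simp add: pochhammer_eq_fact_recip_prod)

lemma recip_prod_eq_gbinomial: "recip_prod z k = (-1) ^ k * ((-1 - z) gchoose k)"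
  by (simp add: recip_prod_eq_pochhammer gbinomial_pochhammer power_mult_distrib[symmetric] add.commute)

lemma gbinomial_Suc_eq_recip_prod:
  "(-1) ^ Suc j * (z gchoose Suc j) = - z * recip_prod (- z) j / of_nat (Suc j)"
  by (simp add: gbinomial_pochhammer recip_prod_eq_pochhammer pochhammer_rec field_simps
      del: of_nat_Suc)

lemma recip_prod_nonzero:
  assumes "\<And>j. 0 < j \<Longrightarrow> of_nat j + z \<noteq> (0::'a::field_char_0)"
  shows "recip_prod z k \<noteq> 0"
proof -
  have "1 + z / of_nat j \<noteq> 0" if "j \<in> {1..k}" for j
  proof -
    have "(of_nat j :: 'a) \<noteq> 0" and "of_nat j + z \<noteq> 0" using assms that by auto
    then show ?thesis by (simp add: field_simps)
  qed
  then show ?thesis by (simp add: recip_prod_def)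
qed

(* The two factors have generating functions (1 - x)^(-1-z) and (1 - x)^z, whose product is 1/(1 - x). *)
lemma recip_prod_gbinomial_convolution:
  "(\<Sum>k\<le>M. recip_prod z k * ((-1) ^ (M - k) * (z gchoose (M - k)))) = 1"
proof -
  have "(\<Sum>k\<le>M. recip_prod z k * ((-1) ^ (M - k) * (z gchoose (M - k))))
      = (\<Sum>k\<le>M. (-1) ^ M * (((-1 - z) gchoose k) * (z gchoose (M - k))))"
  proof (intro sum.cong refl)
    fix k assume "k \<in> {..M}"
    then have sign: "(-1::'a) ^ k * (-1) ^ (M - k) = (-1) ^ M" by (simp flip: power_add)
    have "recip_prod z k * ((-1) ^ (M - k) * (z gchoose (M - k)))
        = ((-1) ^ k * (-1) ^ (M - k)) * (((-1 - z) gchoose k) * (z gchoose (M - k)))"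
      by (simp only: recip_prod_eq_gbinomial mult_ac)
    then show "recip_prod z k * ((-1) ^ (M - k) * (z gchoose (M - k)))
             = (-1) ^ M * (((-1 - z) gchoose k) * (z gchoose (M - k)))"
      by (simp only: sign)
  qed
  also have "\<dots> = (-1) ^ M * ((-1) gchoose M)"
    by (simp add: atMost_atLeast0 gbinomial_Vandermonde flip: sum_distrib_left)
  also have "\<dots> = 1"
    by (simp add: gbinomial_pochhammer pochhammer_fact[symmetric] flip: power_mult_distrib)
  finally show ?thesis .
qed

definition recip_conv :: "'a::field_char_0 \<Rightarrow> nat \<Rightarrow> (nat \<Rightarrow> 'a) \<Rightarrow> 'a" where
  "recip_conv z M w = (\<Sum>i<M. recip_prod z i * recip_prod (- z) (M - 1 - i) * w i)"

lemma recip_conv_0 [simp]: "recip_conv z 0 w = 0"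
  by (simp add: recip_conv_def)

lemma recip_conv_Suc:
  "recip_conv z (Suc M) w
     = recip_conv z M (\<lambda>i. w i * (1 - z / of_nat (M - i))) + recip_prod z M * w M"
proof -
  have "recip_prod (- z) (M - i) = recip_prod (- z) (M - 1 - i) * (1 - z / of_nat (M - i))"
    if "i < M" for i
    using recip_prod_Suc[of "- z" "M - 1 - i"] that by (simp add: Suc_diff_Suc)
  then show ?thesis
    by (simp add: recip_conv_def mult_ac)
qed

lemma recip_conv_cong:
  "(\<And>i. i < M \<Longrightarrow> w i = w' i) \<Longrightarrow> recip_conv z M w = recip_conv z M w'"
  by (simp add: recip_conv_def)

lemma recip_conv_add:
  "recip_conv z M (\<lambda>i. w i + w' i) = recip_conv z M w + recip_conv z M w'"
  by (simp add: recip_conv_def sum.distrib algebra_simps)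

lemma recip_conv_scale: "recip_conv z M (\<lambda>i. c * w i) = c * recip_conv z M w"
  by (simp add: recip_conv_def sum_distrib_left mult_ac)

lemma z_recip_conv_dist:
  "z * recip_conv z M (\<lambda>i. 1 / of_nat (M - i)) = recip_prod z M - 1"
proof -
  have "z * recip_conv z M (\<lambda>i. 1 / of_nat (M - i))
      = - (\<Sum>i<M. recip_prod z i * ((-1) ^ (M - i) * (z gchoose (M - i))))"
    unfolding recip_conv_def sum_distrib_left sum_negf[symmetric]
  proof (intro sum.cong refl)
    fix i assume "i \<in> {..<M}"
    then have "M - i = Suc (M - 1 - i)" by auto
    then show "z * (recip_prod z i * recip_prod (- z) (M - 1 - i) * (1 / of_nat (M - i)))
             = - (recip_prod z i * ((-1) ^ (M - i) * (z gchoose (M - i))))"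
      by (simp only: gbinomial_Suc_eq_recip_prod) (simp add: field_simps)
  qed
  also have "(\<Sum>i<M. recip_prod z i * ((-1) ^ (M - i) * (z gchoose (M - i)))) = 1 - recip_prod z M"
    using recip_prod_gbinomial_convolution[of z M] by (simp add: lessThan_Suc_atMost[symmetric] eq_diff_eq)
  finally show ?thesis by simp
qed

lemma inverse_add_partial_fraction:
  fixes a b c z :: "'a::field"
  assumes "a + z \<noteq> 0" "b \<noteq> 0" "c + z \<noteq> 0" "a + b = c"
  shows "1 / (a + z) * (1 - z / b) = (1 - z / (c + z)) * (1 / (a + z)) + (- z / (c + z)) * (1 / b)"
proof -
  have "1 / (a + z) + 1 / b = (c + z) / ((a + z) * b)"
    using assms by (auto simp: field_simps)
  then have "z / (c + z) * (1 / (a + z) + 1 / b) = z / ((a + z) * b)"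
    using assms(3) by simp
  moreover have "1 / (a + z) * (1 - z / b) = 1 / (a + z) - z / ((a + z) * b)"
    by (simp add: right_diff_distrib)
  ultimately show ?thesis by (simp add: algebra_simps)
qed

lemma inverse_mult_add_partial_fraction:
  fixes a b c z :: "'a::field"
  assumes "a \<noteq> 0" "a + z \<noteq> 0" "b \<noteq> 0" "c \<noteq> 0" "c + z \<noteq> 0" "a + b = c"
  shows "1 / (a * (a + z)) * (1 - z / b)
       = (1 - z / c) * (1 / (a * (a + z))) + (- z / (c * (c + z))) * (1 / (a + z) + 1 / b)"
proof -
  have "1 / (a + z) + 1 / b = (c + z) / ((a + z) * b)"
    using assms by (auto simp: field_simps)
  then have "(- z / (c * (c + z))) * (1 / (a + z) + 1 / b) = - z / (c * ((a + z) * b))"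
    using assms(5) by simp
  moreover have "1 / (a * (a + z)) * (1 - z / b) = (1 - z / c) * (1 / (a * (a + z))) - z / (c * ((a + z) * b))"
    using assms(1-4,6) by (auto simp: divide_simps) (simp add: algebra_simps)
  ultimately show ?thesis by simp
qed

lemma z_recip_conv_shift:
  assumes nz: "\<And>j. 0 < j \<Longrightarrow> of_nat j + z \<noteq> (0::'a::field_char_0)"
  shows "z * recip_conv z M (\<lambda>i. 1 / (of_nat i + 1 + z)) * recip_prod z M = recip_prod z M - 1"
proof (induction M)
  case (Suc M)
  define q \<Phi> V where "q = recip_prod z M"
    and "\<Phi> = recip_conv z M (\<lambda>i. 1 / (of_nat i + 1 + z))"
    and "V = recip_conv z M (\<lambda>i. 1 / of_nat (M - i))"
  define E D :: 'a where "E = of_nat M + 1" and "D = E + z"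
  have nz_shift: "of_nat i + 1 + z \<noteq> 0" for i using nz[of "Suc i"] by (simp add: add.commute)
  have "E \<noteq> 0" unfolding E_def by (metis of_nat_Suc of_nat_neq_0 add.commute)
  have "D \<noteq> 0" unfolding D_def E_def by (rule nz_shift)
  have "q \<noteq> 0" unfolding q_def by (rule recip_prod_nonzero[OF nz])
  have IH: "z * \<Phi> * q = q - 1" using Suc.IH by (simp add: q_def \<Phi>_def)
  have V: "z * V = q - 1" unfolding V_def q_def by (rule z_recip_conv_dist)
  have q_Suc: "recip_prod z (Suc M) = q * (D / E)"
    using \<open>E \<noteq> 0\<close> by (simp add: recip_prod_Suc q_def D_def E_def field_simps)
  have "1 / (of_nat i + 1 + z) * (1 - z / of_nat (M - i))
      = (1 - z / D) * (1 / (of_nat i + 1 + z)) + (- z / D) * (1 / of_nat (M - i))" if "i < M" for i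
    unfolding D_def
    by (rule inverse_add_partial_fraction) (use that nz_shift \<open>D \<noteq> 0\<close> in \<open>simp_all add: D_def E_def\<close>)
  then have "recip_conv z (Suc M) (\<lambda>i. 1 / (of_nat i + 1 + z))
      = recip_conv z M (\<lambda>i. (1 - z / D) * (1 / (of_nat i + 1 + z)) + (- z / D) * (1 / of_nat (M - i)))
        + q / D"
    unfolding recip_conv_Suc q_def D_def E_def by (simp cong: recip_conv_cong)
  also have "\<dots> = (1 - z / D) * \<Phi> + (- z / D) * V + q / D"
    by (simp only: recip_conv_add recip_conv_scale \<Phi>_def V_def)
  finally have conv_Suc: "recip_conv z (Suc M) (\<lambda>i. 1 / (of_nat i + 1 + z)) = \<dots>" .
  have "z * ((1 - z / D) * \<Phi> + (- z / D) * V + q / D) * (q * (D / E))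
      = ((D - z) * (z * \<Phi> * q) - z * (z * V) * q + z * q * q) / E"
    using \<open>D \<noteq> 0\<close> \<open>E \<noteq> 0\<close> by (simp add: field_simps)
  also have "\<dots> = q * (D / E) - 1"
    unfolding IH V using \<open>E \<noteq> 0\<close> by (simp add: D_def field_simps)
  finally show ?case unfolding conv_Suc q_Suc .
qed simp

lemma recip_conv_harmonic_Suc:
  fixes z :: "'a::field_char_0"
  assumes nz: "\<And>j. 0 < j \<Longrightarrow> of_nat j + z \<noteq> 0"
  shows "recip_conv z (Suc M) (\<lambda>i. 1 / ((of_nat i + 1) * (of_nat i + 1 + z)))
       = (1 - z / (of_nat M + 1)) * recip_conv z M (\<lambda>i. 1 / ((of_nat i + 1) * (of_nat i + 1 + z)))
         + 1 / ((of_nat M + 1) ^ 2 * recip_prod z (Suc M))"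
proof -
  define q \<Phi> V where "q = recip_prod z M"
    and "\<Phi> = recip_conv z M (\<lambda>i. 1 / (of_nat i + 1 + z))"
    and "V = recip_conv z M (\<lambda>i. 1 / of_nat (M - i))"
  define E D :: 'a where "E = of_nat M + 1" and "D = E + z"
  have nz_shift: "of_nat i + 1 + z \<noteq> 0" for i using nz[of "Suc i"] by (simp add: add.commute)
  have "E \<noteq> 0" unfolding E_def by (metis of_nat_Suc of_nat_neq_0 add.commute)
  have "D \<noteq> 0" unfolding D_def E_def by (rule nz_shift)
  have "q \<noteq> 0" unfolding q_def by (rule recip_prod_nonzero[OF nz])
  have \<Phi>: "z * \<Phi> * q = q - 1" unfolding \<Phi>_def q_def by (rule z_recip_conv_shift[OF nz])
  have V: "z * V = q - 1" unfolding V_def q_def by (rule z_recip_conv_dist)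
  have q_Suc: "recip_prod z (Suc M) = q * (D / E)"
    using \<open>E \<noteq> 0\<close> by (simp add: recip_prod_Suc q_def D_def E_def field_simps)
  have "1 / ((of_nat i + 1) * (of_nat i + 1 + z)) * (1 - z / of_nat (M - i))
      = (1 - z / E) * (1 / ((of_nat i + 1) * (of_nat i + 1 + z)))
        + (- z / (E * D)) * (1 / (of_nat i + 1 + z) + 1 / of_nat (M - i))" if "i < M" for i
    unfolding D_def
  proof (rule inverse_mult_add_partial_fraction)
    show "(of_nat i + 1 :: 'a) \<noteq> 0" by (metis of_nat_Suc of_nat_neq_0 add.commute)
  qed (use that nz_shift \<open>E \<noteq> 0\<close> \<open>D \<noteq> 0\<close> in \<open>simp_all add: D_def E_def\<close>)
  then have "recip_conv z (Suc M) (\<lambda>i. 1 / ((of_nat i + 1) * (of_nat i + 1 + z)))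
      = recip_conv z M (\<lambda>i. (1 - z / E) * (1 / ((of_nat i + 1) * (of_nat i + 1 + z)))
          + (- z / (E * D)) * (1 / (of_nat i + 1 + z) + 1 / of_nat (M - i)))
        + q / (E * D)"
    unfolding recip_conv_Suc q_def D_def E_def by (simp cong: recip_conv_cong)
  also have "\<dots> = (1 - z / E) * recip_conv z M (\<lambda>i. 1 / ((of_nat i + 1) * (of_nat i + 1 + z)))
        + ((- z / (E * D)) * (\<Phi> + V) + q / (E * D))"
    by (simp only: recip_conv_add recip_conv_scale \<Phi>_def V_def add.assoc)
  also have "(- z / (E * D)) * (\<Phi> + V) + q / (E * D) = (q - (z * \<Phi> * q) / q - z * V) / (E * D)"
    using \<open>q \<noteq> 0\<close> by (simp add: diff_divide_distrib add_divide_distrib algebra_simps)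
  also have "\<dots> = 1 / (E ^ 2 * recip_prod z (Suc M))"
    unfolding \<Phi> V q_Suc using \<open>q \<noteq> 0\<close> \<open>E \<noteq> 0\<close> \<open>D \<noteq> 0\<close> by (simp add: field_simps power2_eq_square)
  finally show ?thesis by (simp add: E_def)
qed

lemma recip_conv_eq_sum:
  fixes z :: "'a::field_char_0"
  assumes nz_plus: "\<And>j. 0 < j \<Longrightarrow> of_nat j + z \<noteq> 0"
    and nz_minus: "\<And>j. 0 < j \<Longrightarrow> of_nat j - z \<noteq> 0"
  shows "recip_conv z N (\<lambda>i. 1 / ((of_nat i + 1) * (of_nat i + 1 + z)))
       = recip_prod (- z) N
         * (\<Sum>l<N. 1 / ((of_nat l + 1) ^ 2 * (recip_prod z (Suc l) * recip_prod (- z) (Suc l))))"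
proof (induction N)
  case (Suc M)
  define G where
    "G = (\<Sum>l<M. 1 / ((of_nat l + 1) ^ 2 * (recip_prod z (Suc l) * recip_prod (- z) (Suc l))))"
  have R_Suc: "recip_prod (- z) (Suc M) = recip_prod (- z) M * (1 - z / (of_nat M + 1))"
    by (simp add: recip_prod_Suc add.commute)
  have "recip_prod (- z) (Suc M) \<noteq> 0" by (rule recip_prod_nonzero) (use nz_minus in simp)
  then have "recip_prod (- z) (Suc M) * G + 1 / ((of_nat M + 1) ^ 2 * recip_prod z (Suc M))
      = recip_prod (- z) (Suc M)
        * (G + 1 / ((of_nat M + 1) ^ 2 * (recip_prod z (Suc M) * recip_prod (- z) (Suc M))))"
    by (simp add: distrib_left)
  then show ?case
    using Suc.IH by (simp add: recip_conv_harmonic_Suc[OF nz_plus] R_Suc G_def mult_ac)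
qed simp

(*
  esym_recip r k = e_r(1, 1/2, ..., 1/k) and hsym_recip_sq m l = h_m(1, 1/2^2, ..., 1/l^2), the elementary
  and complete homogeneous symmetric functions; both recursions split off the largest index.
*)
primrec esym_recip :: "nat \<Rightarrow> nat \<Rightarrow> real" where
  "esym_recip 0 k = 1"
| "esym_recip (Suc r) k = (\<Sum>j=1..k. esym_recip r (j - 1) / real j)"

primrec hsym_recip_sq :: "nat \<Rightarrow> nat \<Rightarrow> real" where
  "hsym_recip_sq 0 l = 1"
| "hsym_recip_sq (Suc m) l = (\<Sum>j=1..l. hsym_recip_sq m j / real j ^ 2)"

lemma esym_recip_0_right: "esym_recip r 0 = (if r = 0 then 1 else 0)"
  by (cases r) auto

lemma hsym_recip_sq_0_right: "hsym_recip_sq m 0 = (if m = 0 then 1 else 0)"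
  by (cases m) auto

definition fps_recip_prod :: "nat \<Rightarrow> real fps" where
  "fps_recip_prod k = (\<Prod>j=1..k. 1 + fps_const (1 / real j) * fps_X)"

lemma fps_nth_recip_prod: "fps_nth (fps_recip_prod k) r = esym_recip r k"
proof (induction k arbitrary: r)
  case (Suc k)
  have "fps_recip_prod (Suc k) = fps_recip_prod k + fps_const (1 / real (Suc k)) * (fps_X * fps_recip_prod k)"
    by (simp add: fps_recip_prod_def algebra_simps del: of_nat_Suc)
  then show ?case
    using Suc by (cases r) (simp_all add: esym_recip_0_right)
qed (simp add: fps_recip_prod_def esym_recip_0_right)

definition fps_geometric :: "real \<Rightarrow> real fps" where
  "fps_geometric c = Abs_fps (\<lambda>n. c ^ n)"

lemma fps_geometric_eq_inverse: "fps_geometric c = inverse (1 - fps_const c * fps_X)"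
proof (rule sym, rule fps_inverse_unique, rule fps_ext)
  fix n
  show "fps_nth ((1 - fps_const c * fps_X) * fps_geometric c) n = fps_nth 1 n"
    by (cases n) (simp_all add: fps_geometric_def algebra_simps)
qed

lemma fps_nth_prod_geometric_bounds:
  assumes "finite J" "\<And>j. j \<in> J \<Longrightarrow> 0 \<le> c j"
  shows "0 \<le> fps_nth (\<Prod>j\<in>J. fps_geometric (c j)) q
       \<and> fps_nth (\<Prod>j\<in>J. fps_geometric (c j)) q \<le> (\<Sum>j\<in>J. c j) ^ q"
  using assms
proof (induction J arbitrary: q rule: finite_induct)
  case (insert j J)
  define F where "F = (\<Prod>j\<in>J. fps_geometric (c j))"
  define S where "S = (\<Sum>j\<in>J. c j)"
  have F: "0 \<le> fps_nth F t" "fps_nth F t \<le> S ^ t" for t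
    using insert by (auto simp: F_def S_def)
  have "0 \<le> c j" "0 \<le> S" using insert.prems by (auto simp: S_def intro: sum_nonneg)
  have coeff: "fps_nth (\<Prod>j\<in>insert j J. fps_geometric (c j)) q = (\<Sum>i=0..q. c j ^ i * fps_nth F (q - i))"
    using insert.hyps by (simp add: F_def fps_mult_nth fps_geometric_def)
  have "(\<Sum>i=0..q. c j ^ i * fps_nth F (q - i)) \<le> (\<Sum>i=0..q. of_nat (q choose i) * c j ^ i * S ^ (q - i))"
  proof (rule sum_mono)
    fix i assume "i \<in> {0..q}"
    then have "1 \<le> real (q choose i)" by (simp add: Suc_leI)
    have "c j ^ i * fps_nth F (q - i) \<le> c j ^ i * S ^ (q - i)"
      using F \<open>0 \<le> c j\<close> by (intro mult_left_mono) auto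
    also have "\<dots> \<le> real (q choose i) * (c j ^ i * S ^ (q - i))"
      using mult_right_mono[OF \<open>1 \<le> real (q choose i)\<close>, of "c j ^ i * S ^ (q - i)"]
        \<open>0 \<le> c j\<close> \<open>0 \<le> S\<close> by simp
    finally show "c j ^ i * fps_nth F (q - i) \<le> of_nat (q choose i) * c j ^ i * S ^ (q - i)"
      by (simp add: mult.assoc)
  qed
  also have "\<dots> = (c j + S) ^ q" by (simp add: binomial_ring atLeast0AtMost)
  finally show ?case
    using insert.hyps F \<open>0 \<le> c j\<close> unfolding coeff S_def by (auto intro!: sum_nonneg)
qed simp

lemma fps_nth_prod_geometric_0: "finite J \<Longrightarrow> fps_nth (\<Prod>j\<in>J. fps_geometric (c j)) 0 = 1"
  by (induction J rule: finite_induct) (auto simp: fps_geometric_def)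

definition fps_recip_sq_prod :: "nat \<Rightarrow> real fps" where
  "fps_recip_sq_prod l = (\<Prod>j=1..l. inverse (1 - fps_const (1 / real j ^ 2) * fps_X ^ 2))"

lemma fps_recip_sq_prod_Suc:
  "fps_recip_sq_prod (Suc l)
     = fps_recip_sq_prod l + fps_const (1 / real (Suc l) ^ 2) * (fps_X ^ 2 * fps_recip_sq_prod (Suc l))"
proof -
  define c where "c = 1 / real (Suc l) ^ 2"
  have "(1 - fps_const c * fps_X ^ 2) * inverse (1 - fps_const c * fps_X ^ 2) = 1"
    by (rule inverse_mult_eq_1') simp
  then have "(1 - fps_const c * fps_X ^ 2) * fps_recip_sq_prod (Suc l) = fps_recip_sq_prod l"
    by (simp add: fps_recip_sq_prod_def c_def mult.left_commute del: of_nat_Suc)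
  then show ?thesis by (simp add: c_def algebra_simps)
qed

lemma fps_nth_recip_sq_prod:
  "fps_nth (fps_recip_sq_prod l) n = (if even n then hsym_recip_sq (n div 2) l else 0)"
proof (induction l arbitrary: n)
  case 0
  then show ?case by (simp add: fps_recip_sq_prod_def hsym_recip_sq_0_right) presburger
next
  case (Suc l)
  show ?case
  proof (induction n rule: less_induct)
    case (less n)
    have rec: "fps_nth (fps_recip_sq_prod (Suc l)) n = fps_nth (fps_recip_sq_prod l) n
        + (if n < 2 then 0 else fps_nth (fps_recip_sq_prod (Suc l)) (n - 2) / real (Suc l) ^ 2)"
      by (subst fps_recip_sq_prod_Suc) (simp add: fps_X_power_mult_nth del: of_nat_Suc)
    show ?case
    proof (cases "n < 2")
      case True
      then show ?thesis using rec Suc.IH[of n] by (cases n) auto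
    next
      case False
      then obtain k where n: "n = Suc (Suc k)" by (metis add_2_eq_Suc le_add_diff_inverse not_less)
      show ?thesis
      proof (cases "even n")
        case True
        then obtain m where "k = 2 * m" using n by (auto elim!: evenE simp: Suc_double_not_eq_double)
        then show ?thesis using rec Suc.IH[of n] less.IH[of k] n by simp
      next
        case False
        then show ?thesis using rec Suc.IH[of n] less.IH[of k] n by simp
      qed
    qed
  qed
qed

lemma recip_prod_split:
  assumes "i < N"
  shows "recip_prod z N = recip_prod z (N - 1 - i) * (\<Prod>j\<in>{N-i..N}. 1 + z / of_nat j)"
proof -
  have "{1..N} = {1..N - 1 - i} \<union> {N-i..N}" and "{1..N - 1 - i} \<inter> {N-i..N} = {}"
    using assms by auto
  then show ?thesis by (simp add: recip_prod_def prod.union_disjoint)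
qed

lemma recip_prod_tail_inverse:
  assumes "i < N" and nz: "\<And>j. 0 < j \<Longrightarrow> of_nat j - z \<noteq> (0::'a::field_char_0)"
  shows "(\<Prod>j\<in>{N-i..N}. inverse (1 - z / of_nat j)) = recip_prod (- z) (N - 1 - i) / recip_prod (- z) N"
proof -
  have R_nz: "recip_prod (- z) k \<noteq> 0" for k by (rule recip_prod_nonzero) (use nz in simp)
  have "(\<Prod>j\<in>{N-i..N}. inverse (1 - z / of_nat j)) = inverse (\<Prod>j\<in>{N-i..N}. 1 - z / of_nat j)"
    using prod_inversef[of "\<lambda>j. 1 - z / of_nat j" "{N-i..N}"] by (simp add: o_def)
  also have "\<dots> = recip_prod (- z) (N - 1 - i) / recip_prod (- z) N"
    using recip_prod_split[OF \<open>i < N\<close>, of "- z"] R_nz by (simp add: field_simps)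
  finally show ?thesis .
qed

lemma recip_prod_mult_neg: "recip_prod z l * recip_prod (- z) l = (\<Prod>j=1..l. 1 - z ^ 2 / of_nat j ^ 2)"
  unfolding recip_prod_def prod.distrib[symmetric]
  by (intro prod.cong refl) (simp add: field_simps power2_eq_square)

lemma recip_prod_reciprocal_identity:
  fixes z :: "'a::field_char_0"
  assumes nz_plus: "\<And>j. 0 < j \<Longrightarrow> of_nat j + z \<noteq> 0"
    and nz_minus: "\<And>j. 0 < j \<Longrightarrow> of_nat j - z \<noteq> 0"
  shows "(\<Sum>i<N. 1 / of_nat (Suc i) ^ 2 * recip_prod z i * inverse (1 + z / of_nat (Suc i))
                * (\<Prod>j\<in>{N-i..N}. inverse (1 - z / of_nat j)))
       = (\<Sum>l<N. 1 / of_nat (Suc l) ^ 2 * (\<Prod>j=1..Suc l. inverse (1 - z ^ 2 / of_nat j ^ 2)))"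
proof -
  have "1 / of_nat (Suc i) ^ 2 * recip_prod z i * inverse (1 + z / of_nat (Suc i))
          * (\<Prod>j\<in>{N-i..N}. inverse (1 - z / of_nat j))
      = recip_prod z i * recip_prod (- z) (N - 1 - i) * (1 / ((of_nat i + 1) * (of_nat i + 1 + z)))
          / recip_prod (- z) N" if "i < N" for i
  proof -
    have "1 / a ^ 2 * inverse (1 + z / a) = 1 / (a * (a + z))" if "a \<noteq> 0" "a + z \<noteq> 0" for a :: 'a
      using that by (simp add: divide_simps power2_eq_square)
    from this[of "of_nat (Suc i)"] have "1 / of_nat (Suc i) ^ 2 * inverse (1 + z / of_nat (Suc i))
        = 1 / ((of_nat i + 1) * (of_nat i + 1 + z))"
      using nz_plus[of "Suc i"] by (simp add: add.commute of_nat_neq_0[simplified])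
    then show ?thesis
      using recip_prod_tail_inverse[OF that nz_minus] by (simp add: field_simps)
  qed
  then have "(\<Sum>i<N. 1 / of_nat (Suc i) ^ 2 * recip_prod z i * inverse (1 + z / of_nat (Suc i))
                * (\<Prod>j\<in>{N-i..N}. inverse (1 - z / of_nat j)))
      = recip_conv z N (\<lambda>i. 1 / ((of_nat i + 1) * (of_nat i + 1 + z))) / recip_prod (- z) N"
    by (simp add: recip_conv_def sum_divide_distrib)
  also have "\<dots> = (\<Sum>l<N. 1 / ((of_nat l + 1) ^ 2 * (recip_prod z (Suc l) * recip_prod (- z) (Suc l))))"
    using recip_prod_nonzero[of "- z" N] nz_minus by (simp add: recip_conv_eq_sum[OF nz_plus nz_minus])
  also have "\<dots> = (\<Sum>l<N. 1 / of_nat (Suc l) ^ 2 * (\<Prod>j=1..Suc l. inverse (1 - z ^ 2 / of_nat j ^ 2)))"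
    unfolding recip_prod_mult_neg
    using prod_inversef[of "\<lambda>j. 1 - z ^ 2 / of_nat j ^ 2" "{1..Suc l}" for l]
    by (simp add: o_def add.commute divide_inverse del: prod.cl_ivl_Suc)
  finally show ?thesis .
qed

lemma fps_to_fls_sum: "fps_to_fls (\<Sum>i\<in>A. f i) = (\<Sum>i\<in>A. fps_to_fls (f i))"
  by (induction A rule: infinite_finite_induct) auto

lemma fps_to_fls_prod: "fps_to_fls (\<Prod>i\<in>A. f i) = (\<Prod>i\<in>A. fps_to_fls (f i))"
  by (induction A rule: infinite_finite_induct) (auto simp: fls_times_fps_to_fls)

lemma fps_to_fls_inverse:
  "fps_nth f 0 \<noteq> 0 \<Longrightarrow> fps_to_fls (inverse (f :: 'a::field fps)) = inverse (fps_to_fls f)"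
  by (simp add: fls_inverse_fps_to_fls subdegree_eq_0_iff)

lemma fls_const_divide_of_nat_power: "fls_const (c / real k ^ n) = fls_const c / of_nat k ^ n"
proof -
  have "fls_const c / of_nat k ^ n = fls_const c / fls_const (real k ^ n)"
    by (simp only: fls_of_nat fls_const_power)
  then show ?thesis by (simp add: fls_const_divide_const)
qed

lemma fls_const_divide_of_nat: "fls_const (c / real k) = fls_const c / of_nat k"
  using fls_const_divide_of_nat_power[of c k 1] by simp

lemma of_nat_fls_X_nonzero:
  assumes "0 < j"
  shows "of_nat j + (fls_X :: 'a::field_char_0 fls) \<noteq> 0" and "of_nat j - (fls_X :: 'a fls) \<noteq> 0"
  using assms by (auto dest!: arg_cong[where f = "\<lambda>f. fls_nth f 0"] simp: fls_of_nat)

(* The rational identity is instantiated at z = X in the field of formal Laurent series. *)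
lemma fps_reciprocal_identity:
  "(\<Sum>i<N. fps_const (1 / real (Suc i) ^ 2) * fps_recip_prod i * fps_geometric (- 1 / real (Suc i))
           * (\<Prod>j\<in>{N-i..N}. fps_geometric (1 / real j)))
   = (\<Sum>l<N. fps_const (1 / real (Suc l) ^ 2) * fps_recip_sq_prod (Suc l))"
proof -
  have "fps_to_fls (\<Sum>i<N. fps_const (1 / real (Suc i) ^ 2) * fps_recip_prod i
          * fps_geometric (- 1 / real (Suc i)) * (\<Prod>j\<in>{N-i..N}. fps_geometric (1 / real j)))
      = fps_to_fls (\<Sum>l<N. fps_const (1 / real (Suc l) ^ 2) * fps_recip_sq_prod (Suc l))"
    using recip_prod_reciprocal_identity[of "fls_X :: real fls" N,
        OF of_nat_fls_X_nonzero]
    by (simp add: fps_to_fls_sum fps_to_fls_prod fps_to_fls_inverse fls_times_fps_to_fls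
        fps_to_fls_power fls_const_divide_of_nat fls_const_divide_of_nat_power
        fps_recip_prod_def recip_prod_def fps_geometric_eq_inverse fps_recip_sq_prod_def
        del: of_nat_Suc)
  then show ?thesis by simp
qed

definition head_coeff :: "nat \<Rightarrow> nat \<Rightarrow> real" where
  "head_coeff i t = (\<Sum>r\<le>t. esym_recip r i * (- 1 / real (Suc i)) ^ (t - r)) / real (Suc i) ^ 2"

definition tail_coeff :: "nat \<Rightarrow> nat \<Rightarrow> nat \<Rightarrow> real" where
  "tail_coeff N i q = fps_nth (\<Prod>j\<in>{N-i..N}. fps_geometric (1 / real j)) q"

lemma fps_nth_head:
  "fps_nth (fps_const (1 / real (Suc i) ^ 2) * fps_recip_prod i * fps_geometric (- 1 / real (Suc i))) t
     = head_coeff i t"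
  unfolding mult.assoc fps_mult_left_const_nth
  by (simp add: head_coeff_def fps_mult_nth fps_nth_recip_prod fps_geometric_def atMost_atLeast0
      sum_divide_distrib del: of_nat_Suc)

lemma head_tail_convolution:
  "(\<Sum>i<N. \<Sum>t\<le>n. head_coeff i t * tail_coeff N i (n - t))
     = (if even n then (\<Sum>l<N. hsym_recip_sq (n div 2) (Suc l) / real (Suc l) ^ 2) else 0)"
proof -
  have "(\<Sum>i<N. \<Sum>t\<le>n. head_coeff i t * tail_coeff N i (n - t))
      = fps_nth (\<Sum>i<N. fps_const (1 / real (Suc i) ^ 2) * fps_recip_prod i
          * fps_geometric (- 1 / real (Suc i)) * (\<Prod>j\<in>{N-i..N}. fps_geometric (1 / real j))) n"
    unfolding fps_sum_nth
  proof (rule sum.cong[OF refl])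
    fix i
    show "(\<Sum>t\<le>n. head_coeff i t * tail_coeff N i (n - t))
        = fps_nth (fps_const (1 / real (Suc i) ^ 2) * fps_recip_prod i * fps_geometric (- 1 / real (Suc i))
            * (\<Prod>j\<in>{N-i..N}. fps_geometric (1 / real j))) n"
      by (subst fps_mult_nth) (simp only: fps_nth_head tail_coeff_def atMost_atLeast0)
  qed
  also have "\<dots> = fps_nth (\<Sum>l<N. fps_const (1 / real (Suc l) ^ 2) * fps_recip_sq_prod (Suc l)) n"
    by (simp only: fps_reciprocal_identity)
  also have "\<dots> = (if even n then (\<Sum>l<N. hsym_recip_sq (n div 2) (Suc l) / real (Suc l) ^ 2) else 0)"
    by (simp add: fps_sum_nth fps_nth_recip_sq_prod del: of_nat_Suc)
  finally show ?thesis .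
qed

definition bounded_lists :: "(nat \<Rightarrow> nat \<Rightarrow> bool) \<Rightarrow> nat \<Rightarrow> nat \<Rightarrow> nat list set" where
  "bounded_lists R r N = {xs. length xs = r \<and> sorted_wrt R xs \<and> (\<forall>x\<in>set xs. 1 \<le> x \<and> x \<le> N)}"

lemma finite_bounded_lists: "finite (bounded_lists R r N)"
  by (rule finite_subset[OF _ finite_lists_length_eq[OF finite_atLeastAtMost[of 1 N], of r]])
     (auto simp: bounded_lists_def)

lemma bounded_lists_0 [simp]: "bounded_lists R 0 N = {[]}"
  by (auto simp: bounded_lists_def)

lemma bounded_lists_Suc:
  "bounded_lists R (Suc r) N
     = (\<Union>j\<in>{1..N}. (\<lambda>xs. xs @ [j]) ` {xs \<in> bounded_lists R r N. \<forall>x\<in>set xs. R x j})"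
proof (intro equalityI subsetI)
  fix ys assume ys: "ys \<in> bounded_lists R (Suc r) N"
  then have "ys \<noteq> []" by (auto simp: bounded_lists_def)
  then obtain xs j where ys_eq: "ys = xs @ [j]" by (metis append_butlast_last_id)
  with ys have "j \<in> {1..N}" "xs \<in> {xs \<in> bounded_lists R r N. \<forall>x\<in>set xs. R x j}"
    by (auto simp: bounded_lists_def sorted_wrt_append)
  then show "ys \<in> (\<Union>j\<in>{1..N}. (\<lambda>xs. xs @ [j]) ` {xs \<in> bounded_lists R r N. \<forall>x\<in>set xs. R x j})"
    unfolding ys_eq by blast
next
  fix ys assume "ys \<in> (\<Union>j\<in>{1..N}. (\<lambda>xs. xs @ [j]) ` {xs \<in> bounded_lists R r N. \<forall>x\<in>set xs. R x j})"
  then show "ys \<in> bounded_lists R (Suc r) N" by (auto simp: bounded_lists_def sorted_wrt_append)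
qed

lemma strict_lists_below: "1 \<le> j \<Longrightarrow> j \<le> N \<Longrightarrow>
    {xs \<in> bounded_lists (<) r N. \<forall>x\<in>set xs. x < j} = bounded_lists (<) r (j - 1)"
  by (auto simp: bounded_lists_def)

lemma weak_lists_below: "j \<le> N \<Longrightarrow>
    {xs \<in> bounded_lists (\<le>) r N. \<forall>x\<in>set xs. x \<le> j} = bounded_lists (\<le>) r j"
  by (auto simp: bounded_lists_def)

lemma sum_bounded_lists_Suc:
  fixes g :: "nat list \<Rightarrow> 'a::comm_monoid_add"
  shows "(\<Sum>ys\<in>bounded_lists R (Suc r) N. g ys)
       = (\<Sum>j=1..N. \<Sum>xs\<in>{xs \<in> bounded_lists R r N. \<forall>x\<in>set xs. R x j}. g (xs @ [j]))"
  unfolding bounded_lists_Suc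
  by (subst sum.UNION_disjoint) (auto simp: finite_bounded_lists sum.reindex inj_on_def)

lemma esym_recip_eq_sum:
  "esym_recip r k = (\<Sum>xs\<in>bounded_lists (<) r k. prod_list (map (\<lambda>x. 1 / real x) xs))"
proof (induction r arbitrary: k)
  case (Suc r)
  have "(\<Sum>ys\<in>bounded_lists (<) (Suc r) k. prod_list (map (\<lambda>x. 1 / real x) ys))
      = (\<Sum>j=1..k. \<Sum>xs\<in>bounded_lists (<) r (j - 1). prod_list (map (\<lambda>x. 1 / real x) xs) / real j)"
    unfolding sum_bounded_lists_Suc by (intro sum.cong) (simp_all add: strict_lists_below)
  then show ?case by (simp add: Suc.IH sum_divide_distrib)
qed simp

lemma hsym_recip_sq_eq_sum:
  "hsym_recip_sq m l = (\<Sum>xs\<in>bounded_lists (\<le>) m l. prod_list (map (\<lambda>x. 1 / real x ^ 2) xs))"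
proof (induction m arbitrary: l)
  case (Suc m)
  have "(\<Sum>ys\<in>bounded_lists (\<le>) (Suc m) l. prod_list (map (\<lambda>x. 1 / real x ^ 2) ys))
      = (\<Sum>j=1..l. \<Sum>xs\<in>bounded_lists (\<le>) m j. prod_list (map (\<lambda>x. 1 / real x ^ 2) xs) / real j ^ 2)"
    unfolding sum_bounded_lists_Suc by (intro sum.cong) (simp_all add: weak_lists_below)
  then show ?case by (simp add: Suc.IH sum_divide_distrib)
qed simp

lemma mzv_term_snoc:
  "length xs = r \<Longrightarrow>
    mzv_term (replicate r a @ [s]) (xs @ [j]) = prod_list (map (\<lambda>x. 1 / real x ^ a) xs) / real j ^ s"
  by (induction xs arbitrary: r) (auto simp: mzv_term_def)

lemma mzv_partial_sum:
  "(\<Sum>ks\<in>bounded_lists (<) (Suc r) N. mzv_term (replicate r 1 @ [s]) ks)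
     = (\<Sum>i<N. esym_recip r i / real (Suc i) ^ s)"
proof -
  have "(\<Sum>ks\<in>bounded_lists (<) (Suc r) N. mzv_term (replicate r 1 @ [s]) ks)
      = (\<Sum>j=1..N. \<Sum>xs\<in>bounded_lists (<) r (j - 1). mzv_term (replicate r 1 @ [s]) (xs @ [j]))"
    unfolding sum_bounded_lists_Suc by (intro sum.cong) (simp_all add: strict_lists_below)
  also have "\<dots> = (\<Sum>j=1..N. \<Sum>xs\<in>bounded_lists (<) r (j - 1). prod_list (map (\<lambda>x. 1 / real x) xs) / real j ^ s)"
    by (intro sum.cong refl) (simp add: mzv_term_snoc bounded_lists_def)
  also have "\<dots> = (\<Sum>j=1..N. esym_recip r (j - 1) / real j ^ s)"
    by (simp add: esym_recip_eq_sum sum_divide_distrib)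
  also have "\<dots> = (\<Sum>i<N. esym_recip r i / real (Suc i) ^ s)"
    by (induction N) simp_all
  finally show ?thesis .
qed

lemma mzv_star_partial_sum:
  "(\<Sum>ks\<in>bounded_lists (\<le>) (Suc m) N. mzv_term (replicate (Suc m) 2) ks)
     = (\<Sum>i<N. hsym_recip_sq m (Suc i) / real (Suc i) ^ 2)"
proof -
  have "(\<Sum>ks\<in>bounded_lists (\<le>) (Suc m) N. mzv_term (replicate m 2 @ [2]) ks)
      = (\<Sum>j=1..N. \<Sum>xs\<in>bounded_lists (\<le>) m j. mzv_term (replicate m 2 @ [2]) (xs @ [j]))"
    unfolding sum_bounded_lists_Suc by (intro sum.cong) (simp_all add: weak_lists_below)
  also have "\<dots> = (\<Sum>j=1..N. \<Sum>xs\<in>bounded_lists (\<le>) m j. prod_list (map (\<lambda>x. 1 / real x ^ 2) xs) / real j ^ 2)"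
    by (intro sum.cong refl) (simp add: mzv_term_snoc bounded_lists_def)
  also have "\<dots> = (\<Sum>j=1..N. hsym_recip_sq m j / real j ^ 2)"
    by (simp add: hsym_recip_sq_eq_sum sum_divide_distrib)
  also have "\<dots> = (\<Sum>i<N. hsym_recip_sq m (Suc i) / real (Suc i) ^ 2)"
    by (induction N) simp_all
  finally show ?thesis by (simp add: replicate_append_same)
qed

lemma incseq_finite_subset_UN:
  assumes "incseq B" "finite F" "F \<subseteq> (\<Union>N. B N)"
  obtains N where "F \<subseteq> B N"
proof -
  have "\<exists>N. F \<subseteq> B N"
    using assms(2,3)
  proof (induction F rule: finite_induct)
    case (insert x F)
    then obtain N1 N2 where "F \<subseteq> B N1" "x \<in> B N2" by auto
    then have "insert x F \<subseteq> B (max N1 N2)"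
      using monoD[OF \<open>incseq B\<close>, of N1 "max N1 N2"] monoD[OF \<open>incseq B\<close>, of N2 "max N1 N2"] by auto
    then show ?case by blast
  qed simp
  then show ?thesis using that by blast
qed

lemma infsum_eq_lim_of_exhaustion:
  fixes f :: "'a \<Rightarrow> real"
  assumes nonneg: "\<And>x. x \<in> A \<Longrightarrow> 0 \<le> f x"
    and finite: "\<And>N. finite (B N)" and "incseq B" and exhaust: "A = (\<Union>N. B N)"
    and lim: "(\<lambda>N. sum f (B N)) \<longlonglongrightarrow> L"
  shows "infsum f A = L"
proof -
  have nonneg_B: "0 \<le> f x" if "x \<in> B N" for x N using nonneg exhaust that by blast
  have "incseq (\<lambda>N. sum f (B N))"
    unfolding incseq_def
  proof (intro allI impI)
    fix m n :: nat assume "m \<le> n"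
    then show "sum f (B m) \<le> sum f (B n)"
      using monoD[OF \<open>incseq B\<close>] finite nonneg_B by (intro sum_mono2) auto
  qed
  then have below_L: "sum f (B N) \<le> L" for N by (rule incseq_le[OF _ lim])
  have finite_below_L: "sum f F \<le> L" if "finite F" "F \<subseteq> A" for F
  proof -
    obtain N where "F \<subseteq> B N"
      using incseq_finite_subset_UN[OF \<open>incseq B\<close> \<open>finite F\<close>] \<open>F \<subseteq> A\<close> exhaust by blast
    then have "sum f F \<le> sum f (B N)" using finite nonneg_B by (intro sum_mono2) auto
    then show ?thesis using below_L[of N] by linarith
  qed
  have bdd: "bdd_above (sum f ` {F. F \<subseteq> A \<and> finite F})"
    using finite_below_L by (auto intro!: bdd_aboveI[of _ L])
  have "infsum f A = (SUP F\<in>{F. finite F \<and> F \<subseteq> A}. sum f F)"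
    by (rule nonneg_bdd_above_infsum[OF nonneg bdd])
  also have "\<dots> = L"
  proof (rule antisym)
    show "(SUP F\<in>{F. finite F \<and> F \<subseteq> A}. sum f F) \<le> L"
      by (rule cSUP_least) (use finite_below_L in auto)
    show "L \<le> (SUP F\<in>{F. finite F \<and> F \<subseteq> A}. sum f F)"
    proof (rule LIMSEQ_le_const2[OF lim], intro exI allI impI)
      fix N
      show "sum f (B N) \<le> (SUP F\<in>{F. finite F \<and> F \<subseteq> A}. sum f F)"
        by (rule cSUP_upper) (use finite exhaust bdd in \<open>auto simp: conj_commute\<close>)
    qed
  qed
  finally show ?thesis .
qed

lemma mzv_term_nonneg: "0 \<le> mzv_term s ks"
  unfolding mzv_term_def by (rule prod_list_nonneg) auto

lemma sorted_lists_eq_UN_bounded_lists: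
  "{ks. length ks = r \<and> sorted_wrt R ks \<and> (\<forall>k\<in>set ks. 1 \<le> k)} = (\<Union>N. bounded_lists R r N)"
  by (auto simp: bounded_lists_def intro!: exI[of _ "sum_list _"] member_le_sum_list)

lemma incseq_bounded_lists: "incseq (bounded_lists R r)"
  by (auto simp: incseq_def bounded_lists_def)

lemma mzv_ones_eq_lim:
  assumes "(\<lambda>N. \<Sum>i<N. esym_recip r i / real (Suc i) ^ s) \<longlonglongrightarrow> L"
  shows "mzv (replicate r 1 @ [s]) = L"
  unfolding mzv_def
  by (rule infsum_eq_lim_of_exhaustion[where B = "bounded_lists (<) (Suc r)"])
     (simp_all only: mzv_term_nonneg finite_bounded_lists incseq_bounded_lists sorted_lists_eq_UN_bounded_lists
       length_append_singleton length_replicate mzv_partial_sum assms)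

lemma mzv_star_twos_eq_lim:
  assumes "(\<lambda>N. \<Sum>i<N. hsym_recip_sq m (Suc i) / real (Suc i) ^ 2) \<longlonglongrightarrow> L"
  shows "mzv_star (replicate (Suc m) 2) = L"
  unfolding mzv_star_def
  by (rule infsum_eq_lim_of_exhaustion[where B = "bounded_lists (\<le>) (Suc m)"])
     (simp_all only: mzv_term_nonneg finite_bounded_lists incseq_bounded_lists sorted_lists_eq_UN_bounded_lists
       length_replicate mzv_star_partial_sum assms)

lemma harm_eq_sum_divide: "harm n = (\<Sum>j=1..n. 1 / real j)"
  by (simp add: harm_def divide_inverse)

lemma harm_lessThan: "harm n = (\<Sum>i<n. 1 / real (Suc i))"
  by (simp add: harm_altdef divide_inverse)

lemma harm_le_one_plus_ln: "harm n \<le> 1 + ln (real n + 1)"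
proof (cases n)
  case (Suc m)
  have "harm (Suc m) - ln (real (Suc m)) \<le> harm (Suc 0) - ln (real (Suc 0))"
    using decseq_harm_diff_ln unfolding decseq_def by (metis le0)
  then have "harm (Suc m) \<le> 1 + ln (real (Suc m))" by (simp add: harm_def)
  also have "\<dots> \<le> 1 + ln (real (Suc m) + 1)" by simp
  finally show ?thesis using Suc by simp
qed (simp add: harm_def)

lemma esym_recip_nonneg: "0 \<le> esym_recip r i"
  by (induction r arbitrary: i) (auto intro!: sum_nonneg divide_nonneg_nonneg)

lemma esym_recip_le_harm_power: "esym_recip r i \<le> harm i ^ r"
proof (induction r arbitrary: i)
  case (Suc r)
  have "esym_recip (Suc r) i \<le> (\<Sum>j=1..i. harm i ^ r / real j)"
    unfolding esym_recip.simps
  proof (intro sum_mono divide_right_mono)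
    fix j assume "j \<in> {1..i}"
    then have "harm (j - 1) ^ r \<le> (harm i ^ r :: real)"
      by (intro power_mono harm_mono harm_nonneg) auto
    then show "esym_recip r (j - 1) \<le> harm i ^ r" using Suc.IH[of "j - 1"] by linarith
  qed auto
  also have "\<dots> = harm i ^ r * harm i"
    by (simp add: harm_def sum_divide_distrib[symmetric] divide_inverse sum_distrib_left)
  finally show ?case by (simp add: mult.commute)
qed simp

lemma summable_esym_recip:
  assumes "2 \<le> s"
  shows "summable (\<lambda>i. esym_recip r i / real (Suc i) ^ s)"
proof (rule summable_comparison_test')
  have "summable (\<lambda>i. norm (real (Suc i) powr (-3/2)))"
    using summable_Suc_iff[of "\<lambda>n. real n powr (-3/2)"] summable_real_powr_iff[of "-3/2"] by simp
  moreover have "(\<lambda>i. (1 + ln (real (Suc i))) ^ r / real (Suc i) ^ 2) \<in> O(\<lambda>i. real (Suc i) powr (-3/2))"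
    by real_asymp
  ultimately show "summable (\<lambda>i. (1 + ln (real (Suc i))) ^ r / real (Suc i) ^ 2)"
    by (rule summable_comparison_test_bigo)
  fix i
  have "harm i \<le> 1 + ln (real (Suc i))" using harm_le_one_plus_ln[of i] by (simp add: add.commute)
  then have "esym_recip r i \<le> (1 + ln (real (Suc i))) ^ r"
    using esym_recip_le_harm_power[of r i] harm_nonneg[where 'a = real, of i] by (meson order_trans power_mono)
  moreover have "real (Suc i) ^ 2 \<le> real (Suc i) ^ s"
    using assms by (intro power_increasing) auto
  ultimately show "norm (esym_recip r i / real (Suc i) ^ s) \<le> (1 + ln (real (Suc i))) ^ r / real (Suc i) ^ 2"
    using esym_recip_nonneg[of r i]
    by (auto intro!: frac_le simp del: of_nat_Suc)
qed

lemma mzv_ones_partial_sums: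
  assumes "2 \<le> s"
  shows "(\<lambda>N. \<Sum>i<N. esym_recip r i / real (Suc i) ^ s) \<longlonglongrightarrow> mzv (replicate r 1 @ [s])"
proof -
  have "(\<lambda>N. \<Sum>i<N. esym_recip r i / real (Suc i) ^ s) \<longlonglongrightarrow> (\<Sum>i. esym_recip r i / real (Suc i) ^ s)"
    by (rule summable_LIMSEQ[OF summable_esym_recip[OF assms]])
  moreover from this have "mzv (replicate r 1 @ [s]) = (\<Sum>i. esym_recip r i / real (Suc i) ^ s)"
    by (rule mzv_ones_eq_lim)
  ultimately show ?thesis by simp
qed

definition coeff_error :: "nat \<Rightarrow> nat \<Rightarrow> real" where
  "coeff_error N n = (\<Sum>i<N. \<Sum>t<n. head_coeff i t * tail_coeff N i (n - t))"

lemma tail_coeff_0: "tail_coeff N i 0 = 1"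
  by (simp add: tail_coeff_def fps_nth_prod_geometric_0)

lemma head_tail_split:
  "(\<Sum>i<N. head_coeff i n) + coeff_error N n
     = (if even n then (\<Sum>l<N. hsym_recip_sq (n div 2) (Suc l) / real (Suc l) ^ 2) else 0)"
proof -
  have "(\<Sum>t\<le>n. head_coeff i t * tail_coeff N i (n - t))
      = head_coeff i n + (\<Sum>t<n. head_coeff i t * tail_coeff N i (n - t))" for i
    by (simp add: lessThan_Suc_atMost[symmetric] tail_coeff_0)
  then show ?thesis
    using head_tail_convolution[of N n] by (simp add: coeff_error_def sum.distrib)
qed

lemma head_coeff_sum:
  "(\<Sum>i<N. head_coeff i n)
     = (\<Sum>r=0..n. (-1) ^ (r + n) * (\<Sum>i<N. esym_recip r i / real (Suc i) ^ (n + 2 - r)))"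
proof -
  have "esym_recip r i * (- 1 / real (Suc i)) ^ (n - r) / real (Suc i) ^ 2
      = (-1) ^ (r + n) * (esym_recip r i / real (Suc i) ^ (n + 2 - r))" if "r \<le> n" for r i
  proof -
    have "r + n = (n - r) + 2 * r" "n + 2 - r = 2 + (n - r)" using that by simp_all
    then have sign: "(-1::real) ^ (r + n) = (-1) ^ (n - r)"
      and pow: "real (Suc i) ^ (n + 2 - r) = real (Suc i) ^ 2 * real (Suc i) ^ (n - r)"
      by (simp_all only: power_add power_mult) simp
    have "esym_recip r i * (- 1 / real (Suc i)) ^ (n - r) / real (Suc i) ^ 2
        = esym_recip r i * ((- 1) ^ (n - r) / real (Suc i) ^ (n - r)) / real (Suc i) ^ 2"
      by (simp only: power_divide)
    also have "\<dots> = (-1) ^ (n - r) * (esym_recip r i / (real (Suc i) ^ 2 * real (Suc i) ^ (n - r)))"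
      by (simp add: mult_ac)
    finally show ?thesis by (simp only: sign pow)
  qed
  then have "(\<Sum>i<N. head_coeff i n)
      = (\<Sum>i<N. \<Sum>r\<le>n. (-1) ^ (r + n) * (esym_recip r i / real (Suc i) ^ (n + 2 - r)))"
    unfolding head_coeff_def sum_divide_distrib by (intro sum.cong refl) auto
  then show ?thesis by (simp add: sum.swap[of _ "{..<N}"] sum_distrib_left atMost_atLeast0)
qed

lemma tail_sum_le_harm: "i < N \<Longrightarrow> (\<Sum>j\<in>{N-i..N}. 1 / real j) \<le> harm N"
  unfolding harm_eq_sum_divide by (intro sum_mono2) auto

lemma tail_coeff_le:
  assumes "i < N" "0 < q" "q \<le> n"
  shows "tail_coeff N i q \<le> (\<Sum>j\<in>{N-i..N}. 1 / real j) * (1 + harm N) ^ n"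
proof -
  define D where "D = (\<Sum>j\<in>{N-i..N}. 1 / real j)"
  have "0 \<le> D" unfolding D_def by (intro sum_nonneg) auto
  have "D \<le> 1 + harm N" using tail_sum_le_harm[OF assms(1)] unfolding D_def by simp
  have "tail_coeff N i q \<le> D ^ q"
    using fps_nth_prod_geometric_bounds[of "{N-i..N}" "\<lambda>j. 1 / real j" q]
    by (simp add: tail_coeff_def D_def)
  also have "\<dots> = D * D ^ (q - 1)" using assms(2) by (simp flip: power_Suc)
  also have "\<dots> \<le> D * (1 + harm N) ^ (q - 1)"
    using \<open>0 \<le> D\<close> \<open>D \<le> 1 + harm N\<close> by (intro mult_left_mono power_mono) auto
  also have "\<dots> \<le> D * (1 + harm N) ^ n"
    using \<open>0 \<le> D\<close> assms(3) harm_nonneg[where 'a = real, of N] by (intro mult_left_mono power_increasing) auto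
  finally show ?thesis unfolding D_def .
qed

lemma abs_head_coeff_le:
  assumes "i < N" "t \<le> n"
  shows "\<bar>head_coeff i t\<bar> \<le> real (Suc n) * (1 + harm N) ^ n / real (Suc i) ^ 2"
proof -
  define X :: real where "X = 1 + harm N"
  have "1 \<le> X" unfolding X_def using harm_nonneg[where 'a = real, of N] by simp
  have "\<bar>\<Sum>r\<le>t. esym_recip r i * (- 1 / real (Suc i)) ^ (t - r)\<bar> \<le> (\<Sum>r\<le>t. X ^ n)"
  proof (rule order_trans[OF sum_abs sum_mono])
    fix r assume "r \<in> {..t}"
    have "esym_recip r i \<le> harm i ^ r" by (rule esym_recip_le_harm_power)
    also have "\<dots> \<le> X ^ r"
      unfolding X_def using harm_mono[where 'a = real, of i N] assms(1) harm_nonneg[where 'a = real, of i] by (intro power_mono) auto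
    also have "\<dots> \<le> X ^ n" using \<open>1 \<le> X\<close> \<open>r \<in> {..t}\<close> assms(2) by (intro power_increasing) auto
    finally have "esym_recip r i \<le> X ^ n" .
    have "\<bar>(- 1 / real (Suc i)) ^ (t - r)\<bar> \<le> 1"
      by (simp add: power_abs power_le_one)
    then have "\<bar>esym_recip r i * (- 1 / real (Suc i)) ^ (t - r)\<bar> \<le> esym_recip r i * 1"
      unfolding abs_mult abs_of_nonneg[OF esym_recip_nonneg] by (rule mult_left_mono) (rule esym_recip_nonneg)
    with \<open>esym_recip r i \<le> X ^ n\<close>
    show "\<bar>esym_recip r i * (- 1 / real (Suc i)) ^ (t - r)\<bar> \<le> X ^ n" by simp
  qed
  also have "\<dots> = real (Suc t) * X ^ n" by simp
  also have "\<dots> \<le> real (Suc n) * X ^ n"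
    using assms(2) \<open>1 \<le> X\<close> by (intro mult_right_mono) auto
  finally show ?thesis
    unfolding head_coeff_def X_def abs_divide by (simp add: divide_right_mono del: of_nat_Suc)
qed

lemma weighted_tail_sum_le:
  "(\<Sum>i<N. (\<Sum>j\<in>{N-i..N}. 1 / real j) / real (Suc i) ^ 2) \<le> (harm N ^ 2 + harm N) / real (Suc N)"
proof -
  have "(\<Sum>i<N. (\<Sum>j\<in>{N-i..N}. 1 / real j) / real (Suc i) ^ 2)
      \<le> (\<Sum>i<N. \<Sum>j\<in>{N-i..N}. (1 / (real j * real (Suc i)) + 1 / real (Suc i) ^ 2) / real (Suc N))"
    unfolding sum_divide_distrib
  proof (intro sum_mono)
    fix i j assume "i \<in> {..<N}" "j \<in> {N-i..N}"
    then have "0 < j" "real (Suc N) \<le> real j + real (Suc i)" by auto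
    then have "1 / (real j * real (Suc i) ^ 2)
        \<le> (real j + real (Suc i)) / (real (Suc N) * (real j * real (Suc i) ^ 2))"
      by (simp add: divide_simps del: of_nat_Suc)
    also have "\<dots> = (1 / (real j * real (Suc i)) + 1 / real (Suc i) ^ 2) / real (Suc N)"
      using \<open>0 < j\<close> by (simp add: field_simps power2_eq_square del: of_nat_Suc)
    finally show "1 / real j / real (Suc i) ^ 2 \<le> (1 / (real j * real (Suc i)) + 1 / real (Suc i) ^ 2) / real (Suc N)"
      by simp
  qed
  also have "\<dots> = (\<Sum>i<N. \<Sum>j\<in>{N-i..N}. 1 / (real j * real (Suc i))) / real (Suc N)
                  + (\<Sum>i<N. \<Sum>j\<in>{N-i..N}. 1 / real (Suc i) ^ 2) / real (Suc N)"
    by (simp only: sum.distrib add_divide_distrib sum_divide_distrib)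
  also have "\<dots> \<le> (\<Sum>i<N. \<Sum>j\<in>{1..N}. 1 / (real j * real (Suc i))) / real (Suc N)
                  + (\<Sum>i<N. \<Sum>j\<in>{N-i..N}. 1 / real (Suc i) ^ 2) / real (Suc N)"
    by (intro add_right_mono divide_right_mono sum_mono sum_mono2) auto
  also have "(\<Sum>i<N. \<Sum>j\<in>{1..N}. 1 / (real j * real (Suc i))) = harm N ^ 2"
  proof -
    have "harm N ^ 2 = (\<Sum>i<N. \<Sum>j=1..N. 1 / real (Suc i) * (1 / real j))"
      unfolding sum_product[symmetric] using harm_lessThan harm_eq_sum_divide by (metis power2_eq_square)
    then show ?thesis by (simp add: mult.commute)
  qed
  also have "(\<Sum>i<N. \<Sum>j\<in>{N-i..N}. 1 / real (Suc i) ^ 2) = harm N"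
  proof -
    have "(\<Sum>j\<in>{N-i..N}. 1 / real (Suc i) ^ 2) = 1 / real (Suc i)" if "i < N" for i
      using that by (simp add: power2_eq_square Suc_diff_le del: of_nat_Suc)
    then show ?thesis by (simp add: harm_lessThan)
  qed
  finally show ?thesis by (simp add: add_divide_distrib)
qed

lemma abs_coeff_error_le:
  "\<bar>coeff_error N n\<bar> \<le> real n * real (Suc n) * (1 + harm N) ^ (2 * n + 2) / real (Suc N)"
proof -
  define X :: real where "X = 1 + harm N"
  define D where "D i = (\<Sum>j\<in>{N-i..N}. 1 / real j)" for i
  have "1 \<le> X" unfolding X_def using harm_nonneg[where 'a = real, of N] by simp
  have "\<bar>coeff_error N n\<bar> \<le> (\<Sum>i<N. \<Sum>t<n. real (Suc n) * X ^ n / real (Suc i) ^ 2 * (D i * X ^ n))"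
    unfolding coeff_error_def
  proof (rule order_trans[OF sum_abs sum_mono], rule order_trans[OF sum_abs sum_mono])
    fix i t assume "i \<in> {..<N}" "t \<in> {..<n}"
    then show "\<bar>head_coeff i t * tail_coeff N i (n - t)\<bar>
        \<le> real (Suc n) * X ^ n / real (Suc i) ^ 2 * (D i * X ^ n)"
      unfolding abs_mult X_def D_def
      using abs_head_coeff_le[of i N t n] tail_coeff_le[of i N "n - t" n]
        fps_nth_prod_geometric_bounds[of "{N-i..N}" "\<lambda>j. 1 / real j" "n - t"]
      by (intro mult_mono) (auto simp: tail_coeff_def)
  qed
  also have "\<dots> = real n * real (Suc n) * X ^ (2 * n) * (\<Sum>i<N. D i / real (Suc i) ^ 2)"
    unfolding mult_2 power_add by (simp add: sum_distrib_left mult_ac)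
  also have "\<dots> \<le> real n * real (Suc n) * X ^ (2 * n) * ((harm N ^ 2 + harm N) / real (Suc N))"
    unfolding D_def using \<open>1 \<le> X\<close> by (intro mult_left_mono weighted_tail_sum_le) auto
  also have "\<dots> \<le> real n * real (Suc n) * X ^ (2 * n) * (X ^ 2 / real (Suc N))"
    unfolding X_def using harm_nonneg[where 'a = real, of N]
    by (intro mult_left_mono divide_right_mono) (auto simp: power2_eq_square algebra_simps)
  finally show ?thesis by (simp add: X_def power_add power2_eq_square mult_ac)
qed

lemma coeff_error_tendsto_0: "(\<lambda>N. coeff_error N n) \<longlonglongrightarrow> 0"
proof (rule Lim_null_comparison)
  define K where "K = 2 * n + 2"
  show "eventually (\<lambda>N. norm (coeff_error N n)
          \<le> real n * real (Suc n) * (2 + ln (real (Suc N))) ^ K / real (Suc N)) sequentially"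
  proof (intro always_eventually allI)
    fix N
    have "1 + harm N \<le> 2 + ln (real (Suc N))"
      using harm_le_one_plus_ln[of N] by (simp add: add.commute)
    then have "(1 + harm N) ^ K \<le> (2 + ln (real (Suc N))) ^ K"
      using harm_nonneg[where 'a = real, of N] by (intro power_mono) auto
    then have "real n * real (Suc n) * (1 + harm N) ^ K / real (Suc N)
        \<le> real n * real (Suc n) * (2 + ln (real (Suc N))) ^ K / real (Suc N)"
      by (intro divide_right_mono mult_left_mono) auto
    then show "norm (coeff_error N n) \<le> real n * real (Suc n) * (2 + ln (real (Suc N))) ^ K / real (Suc N)"
      using abs_coeff_error_le[of N n] unfolding K_def real_norm_def by linarith
  qed
  show "(\<lambda>N. real n * real (Suc n) * (2 + ln (real (Suc N))) ^ K / real (Suc N)) \<longlonglongrightarrow> 0"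
    by real_asymp
qed

theorem proposition4p2:
  fixes n :: nat
  shows "(\<Sum>r=0..n. (-1::real) ^ (r + n) * mzv (replicate r 1 @ [n + 2 - r])) =
         (if even n then mzv_star (replicate (n div 2 + 1) 2) else 0)"
proof -
  define L where "L = (\<Sum>r=0..n. (-1::real) ^ (r + n) * mzv (replicate r 1 @ [n + 2 - r]))"
  have "(\<lambda>N. \<Sum>i<N. head_coeff i n) \<longlonglongrightarrow> L"
    unfolding head_coeff_sum L_def by (intro tendsto_sum tendsto_mult_left mzv_ones_partial_sums) auto
  then have "(\<lambda>N. (\<Sum>i<N. head_coeff i n) + coeff_error N n) \<longlonglongrightarrow> L + 0"
    by (intro tendsto_add coeff_error_tendsto_0)
  then have lim: "(\<lambda>N. if even n then \<Sum>l<N. hsym_recip_sq (n div 2) (Suc l) / real (Suc l) ^ 2 else 0)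
      \<longlonglongrightarrow> L"
    by (simp only: head_tail_split add_0_right)
  show ?thesis
  proof (cases "even n")
    case True
    with lim have "mzv_star (replicate (Suc (n div 2)) 2) = L" by (intro mzv_star_twos_eq_lim) simp
    with True show ?thesis by (simp add: L_def)
  next
    case False
    with lim have "L = 0" by (simp add: LIMSEQ_const_iff)
    with False show ?thesis by (simp add: L_def)
  qed
qed

end
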